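(* Let $(A,\circ_A)$ be a Leibniz algebra, $(l,r,V)$ a representation of it, and $T:V\to A$ an anti-$\mathcal O$-operator of $(A,\circ_A)$ associated to $(l,r,V)$. Define multiplications on $V$ by $u\succ_V v=-l(Tu)v$ and $u\prec_V v=-r(Tv)u$, and set $u\circ_V v=u\succ_V v+u\prec_V v$. Then: (a) $(V,\succ_V,\prec_V)$ satisfies (AL2), (AL3), (AL4); (b) $(V,\succ_V,\prec_V)$ is an anti-pre-Leibniz algebra (equivalently, $(V,\circ_V)$ is a Leibniz algebra) if and only if $T$ is strong; (c) in this case $T$ is a homomorphism of Leibniz algebras from $(V,\circ_V)$ to $(A,\circ_A)$, there is a well-defined anti-pre-Leibniz algebra structure on $T(V)=\{Tu\mid u\in V\}\subseteq A$ given by $(Tu)\succ_A(Tv)=T(u\succ_V v)$, $(Tu)\prec_A(Tv)=T(u\prec_V v)$, and $T:V\to T(V)$ is a homomorphism of anti-pre-Leibniz algebras.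
   Context: All vector spaces are finite-dimensional over a field $\mathbb K$ of characteristic zero. A Leibniz algebra is a vector space $A$ with a multiplication $\circ_A$ satisfying $x\circ_A(y\circ_A z)=(x\circ_A y)\circ_A z+y\circ_A(x\circ_A z)$. A representation of $(A,\circ_A)$ is a triple $(l,r,V)$ with linear maps $l,r:A\to\mathrm{End}(V)$ such that for all $x,y\in A,v\in V$: $l(x\circ_A y)v=l(x)l(y)v-l(y)l(x)v$; $r(x\circ_A y)v=l(x)r(y)v-r(y)l(x)v$; $r(y)l(x)v=-r(y)r(x)v$. An anti-$\mathcal O$-operator of $(A,\circ_A)$ associated to $(l,r,V)$ is a linear map $T:V\to A$ with $(Tu)\circ_A(Tv)=-T\big(l(Tu)v+r(Tv)u\big)$ for all $u,v\in V$; it is strong if moreover $l\big((Tu)\circ_A(Tv)\big)w+r\big((Tu)\circ_A(Tw)\big)v-r\big((Tv)\circ_A(Tw)\big)u=0$ for all $u,v,w\in V$. An anti-pre-Leibniz algebra is a vector space $A$ with multiplications $\succ_A,\prec_A$ such that, with $x\circ_A y=x\succ_A y+x\prec_A y$, for all $x,y,z$: (AL1) $(x\circ_A y)\prec_A z=x\succ_A(y\circ_A z)-y\succ_A(x\circ_A z)$; (AL2) $(x\circ_A y)\succ_A z=y\succ_A(x\succ_A z)-x\succ_A(y\succ_A z)$; (AL3) $x\prec_A(y\circ_A z)=(y\succ_A x)\prec_A z-y\succ_A(x\prec_A z)$; (AL4) $(x\succ_A y)\prec_A z=-(y\prec_A x)\prec_A z$. A homomorphism of anti-pre-Leibniz algebras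 is a linear map preserving both multiplications. *)

theory Defs
  imports Main "HOL.Vector_Spaces"
begin

text \<open>Vector spaces over a field 'k of characteristic zero are modelled with the
  library locale vector_space (scalar multiplication as parameter).
  Finite-dimensionality: existence of a finite basis.\<close>

definition fin_dim_vs :: "('k::field \<Rightarrow> 'v::ab_group_add \<Rightarrow> 'v) \<Rightarrow> bool" where
  "fin_dim_vs s \<longleftrightarrow> (\<exists>B. finite_dimensional_vector_space s B)"

definition bilinear_map ::
  "('k::field \<Rightarrow> 'a::ab_group_add \<Rightarrow> 'a) \<Rightarrow> ('k \<Rightarrow> 'b::ab_group_add \<Rightarrow> 'b) \<Rightarrow>
   ('k \<Rightarrow> 'c::ab_group_add \<Rightarrow> 'c) \<Rightarrow> ('a \<Rightarrow> 'b \<Rightarrow> 'c) \<Rightarrow> bool" where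
  "bilinear_map s1 s2 s3 f \<longleftrightarrow>
     (\<forall>x. Vector_Spaces.linear s2 s3 (f x)) \<and> (\<forall>y. Vector_Spaces.linear s1 s3 (\<lambda>x. f x y))"

definition bilinear_on ::
  "('k::field \<Rightarrow> 'a::ab_group_add \<Rightarrow> 'a) \<Rightarrow> 'a set \<Rightarrow> ('a \<Rightarrow> 'a \<Rightarrow> 'a) \<Rightarrow> bool" where
  "bilinear_on s S f \<longleftrightarrow>
     (\<forall>x\<in>S. \<forall>y\<in>S. f x y \<in> S) \<and>
     (\<forall>x\<in>S. \<forall>y\<in>S. \<forall>z\<in>S. \<forall>c.
        f (x + y) z = f x z + f y z \<and> f z (x + y) = f z x + f z y \<and>
        f (s c x) y = s c (f x y) \<and> f x (s c y) = s c (f x y))"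

definition Leibniz_algebra :: "('k::field \<Rightarrow> 'a::ab_group_add \<Rightarrow> 'a) \<Rightarrow> ('a \<Rightarrow> 'a \<Rightarrow> 'a) \<Rightarrow> bool" where
  "Leibniz_algebra s m \<longleftrightarrow> vector_space s \<and> bilinear_map s s s m \<and>
     (\<forall>x y z. m x (m y z) = m (m x y) z + m y (m x z))"

definition Leibniz_representation ::
  "('k::field \<Rightarrow> 'a::ab_group_add \<Rightarrow> 'a) \<Rightarrow> ('k \<Rightarrow> 'v::ab_group_add \<Rightarrow> 'v) \<Rightarrow>
   ('a \<Rightarrow> 'a \<Rightarrow> 'a) \<Rightarrow> ('a \<Rightarrow> 'v \<Rightarrow> 'v) \<Rightarrow> ('a \<Rightarrow> 'v \<Rightarrow> 'v) \<Rightarrow> bool" where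
  "Leibniz_representation sA sV m l r \<longleftrightarrow>
     vector_space sV \<and> bilinear_map sA sV sV l \<and> bilinear_map sA sV sV r \<and>
     (\<forall>x y v. l (m x y) v = l x (l y v) - l y (l x v)) \<and>
     (\<forall>x y v. r (m x y) v = l x (r y v) - r y (l x v)) \<and>
     (\<forall>x y v. r y (l x v) = - r y (r x v))"

definition anti_O_operator ::
  "('k::field \<Rightarrow> 'a::ab_group_add \<Rightarrow> 'a) \<Rightarrow> ('k \<Rightarrow> 'v::ab_group_add \<Rightarrow> 'v) \<Rightarrow>
   ('a \<Rightarrow> 'a \<Rightarrow> 'a) \<Rightarrow> ('a \<Rightarrow> 'v \<Rightarrow> 'v) \<Rightarrow> ('a \<Rightarrow> 'v \<Rightarrow> 'v) \<Rightarrow> ('v \<Rightarrow> 'a) \<Rightarrow> bool" where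
  "anti_O_operator sA sV m l r T \<longleftrightarrow>
     Vector_Spaces.linear sV sA T \<and>
     (\<forall>u v. m (T u) (T v) = - T (l (T u) v + r (T v) u))"

definition strong_anti_O_operator ::
  "('k::field \<Rightarrow> 'a::ab_group_add \<Rightarrow> 'a) \<Rightarrow> ('k \<Rightarrow> 'v::ab_group_add \<Rightarrow> 'v) \<Rightarrow>
   ('a \<Rightarrow> 'a \<Rightarrow> 'a) \<Rightarrow> ('a \<Rightarrow> 'v \<Rightarrow> 'v) \<Rightarrow> ('a \<Rightarrow> 'v \<Rightarrow> 'v) \<Rightarrow> ('v \<Rightarrow> 'a) \<Rightarrow> bool" where
  "strong_anti_O_operator sA sV m l r T \<longleftrightarrow>
     anti_O_operator sA sV m l r T \<and>
     (\<forall>u v w. l (m (T u) (T v)) w + r (m (T u) (T w)) v - r (m (T v) (T w)) u = 0)"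

definition AL1_on :: "'a::ab_group_add set \<Rightarrow> ('a \<Rightarrow> 'a \<Rightarrow> 'a) \<Rightarrow> ('a \<Rightarrow> 'a \<Rightarrow> 'a) \<Rightarrow> bool" where
  "AL1_on S sc pr \<longleftrightarrow> (\<forall>x\<in>S. \<forall>y\<in>S. \<forall>z\<in>S.
     pr (sc x y + pr x y) z = sc x (sc y z + pr y z) - sc y (sc x z + pr x z))"

definition AL2_on :: "'a::ab_group_add set \<Rightarrow> ('a \<Rightarrow> 'a \<Rightarrow> 'a) \<Rightarrow> ('a \<Rightarrow> 'a \<Rightarrow> 'a) \<Rightarrow> bool" where
  "AL2_on S sc pr \<longleftrightarrow> (\<forall>x\<in>S. \<forall>y\<in>S. \<forall>z\<in>S.
     sc (sc x y + pr x y) z = sc y (sc x z) - sc x (sc y z))"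

definition AL3_on :: "'a::ab_group_add set \<Rightarrow> ('a \<Rightarrow> 'a \<Rightarrow> 'a) \<Rightarrow> ('a \<Rightarrow> 'a \<Rightarrow> 'a) \<Rightarrow> bool" where
  "AL3_on S sc pr \<longleftrightarrow> (\<forall>x\<in>S. \<forall>y\<in>S. \<forall>z\<in>S.
     pr x (sc y z + pr y z) = pr (sc y x) z - sc y (pr x z))"

definition AL4_on :: "'a::ab_group_add set \<Rightarrow> ('a \<Rightarrow> 'a \<Rightarrow> 'a) \<Rightarrow> ('a \<Rightarrow> 'a \<Rightarrow> 'a) \<Rightarrow> bool" where
  "AL4_on S sc pr \<longleftrightarrow> (\<forall>x\<in>S. \<forall>y\<in>S. \<forall>z\<in>S.
     pr (sc x y) z = - pr (pr y x) z)"

definition anti_pre_Leibniz_on ::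
  "('k::field \<Rightarrow> 'a::ab_group_add \<Rightarrow> 'a) \<Rightarrow> 'a set \<Rightarrow> ('a \<Rightarrow> 'a \<Rightarrow> 'a) \<Rightarrow> ('a \<Rightarrow> 'a \<Rightarrow> 'a) \<Rightarrow> bool" where
  "anti_pre_Leibniz_on s S sc pr \<longleftrightarrow>
     vector_space s \<and> module.subspace s S \<and> bilinear_on s S sc \<and> bilinear_on s S pr \<and>
     AL1_on S sc pr \<and> AL2_on S sc pr \<and> AL3_on S sc pr \<and> AL4_on S sc pr"

end

theory Submission
  imports Defs
begin

(* With the strong defect
  S(u,v,w) = l(Tu \<circ> Tv) w + r(Tu \<circ> Tw) v - r(Tv \<circ> Tw) u,
  a direct computation from the representation identities and the anti-O-operator identity,
  in the form T(u \<circ>\<^sub>V v) = Tu \<circ> Tv, shows that (AL2)-(AL4) hold identically on V, that the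
  defect of (AL1) is -S and that the defect of the Leibniz identity for \<circ>\<^sub>V is 2S;
  in characteristic zero both vanish exactly when T is strong. The same identity
  shows that ker T is stable under every l(Tu) and r(Tv), so the operations of V descend
  to T(V) and T carries the anti-pre-Leibniz identities there. *)

lemma bilinear_map_simps:
  assumes "bilinear_map s1 s2 s3 f"
  shows "f (a + b) v = f a v + f b v" "f (s1 c a) v = s3 c (f a v)" "f 0 v = 0"
    "f (- a) v = - f a v" "f (a - b) v = f a v - f b v"
    "f a (v + w) = f a v + f a w" "f a (s2 c v) = s3 c (f a v)" "f a 0 = 0"
    "f a (- v) = - f a v" "f a (v - w) = f a v - f a w"
proof -
  have left: "module_hom s1 s3 (\<lambda>x. f x v)" and right: "module_hom s2 s3 (f a)" for a v
    using assms unfolding bilinear_map_def linear_iff_module_hom by simp_all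
  show "f (a + b) v = f a v + f b v" "f (s1 c a) v = s3 c (f a v)" "f 0 v = 0"
    "f (- a) v = - f a v" "f (a - b) v = f a v - f b v"
    using module_hom.add[OF left] module_hom.scale[OF left] module_hom.zero[OF left]
      module_hom.neg[OF left] module_hom.diff[OF left] by simp_all
  show "f a (v + w) = f a v + f a w" "f a (s2 c v) = s3 c (f a v)" "f a 0 = 0"
    "f a (- v) = - f a v" "f a (v - w) = f a v - f a w"
    using module_hom.add[OF right] module_hom.scale[OF right] module_hom.zero[OF right]
      module_hom.neg[OF right] module_hom.diff[OF right] by simp_all
qed

lemma vector_space_double_eq_zero_iff:
  fixes s :: "'k::field_char_0 \<Rightarrow> 'v::ab_group_add \<Rightarrow> 'v" and x :: 'v
  assumes "vector_space s"
  shows "x + x = 0 \<longleftrightarrow> x = 0"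
proof
  interpret vector_space s by fact
  assume "x + x = 0"
  then have "s (1/2 + 1/2) x = 0"
    by (simp only: scale_left_distrib scale_right_distrib[symmetric] scale_zero_right)
  then show "x = 0" by simp
qed simp

lemma induced_operation_on_range:
  assumes "\<And>u v u' v'. T u = T u' \<Longrightarrow> T v = T v' \<Longrightarrow> T (f u v) = T (f u' v')"
  obtains g where "\<And>u v. g (T u) (T v) = T (f u v)"
proof
  show "(\<lambda>a b. T (f (inv T a) (inv T b))) (T u) (T v) = T (f u v)" for u v
    by (rule assms) (simp_all add: f_inv_into_f)
qed

lemma anti_pre_Leibniz_on_range:
  assumes T: "Vector_Spaces.linear sV sA T" and V: "anti_pre_Leibniz_on sV UNIV sc pr"
    and sc: "\<And>u v. scA (T u) (T v) = T (sc u v)" and pr: "\<And>u v. prA (T u) (T v) = T (pr u v)"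
  shows "anti_pre_Leibniz_on sA (range T) scA prA"
proof -
  interpret T: linear sV sA T by fact
  have "T.vs2.subspace (range T)"
    using T.subspace_image[OF T.vs1.subspace_UNIV] .
  then show ?thesis
    using V unfolding anti_pre_Leibniz_on_def bilinear_on_def AL1_on_def AL2_on_def AL3_on_def AL4_on_def
    by (auto simp: T.vs2.vector_space_axioms sc pr simp flip: T.add T.scale T.diff T.neg)
qed

locale Leibniz_anti_O =
  fixes sA :: "'k::field \<Rightarrow> 'a::ab_group_add \<Rightarrow> 'a" and sV :: "'k \<Rightarrow> 'v::ab_group_add \<Rightarrow> 'v"
    and mA :: "'a \<Rightarrow> 'a \<Rightarrow> 'a" and l r :: "'a \<Rightarrow> 'v \<Rightarrow> 'v" and T :: "'v \<Rightarrow> 'a"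
  assumes Leibniz: "Leibniz_algebra sA mA"
    and rep: "Leibniz_representation sA sV mA l r"
    and anti_O: "anti_O_operator sA sV mA l r T"
begin

lemma T_linear: "Vector_Spaces.linear sV sA T"
  using anti_O by (simp add: anti_O_operator_def)

sublocale T: linear sV sA T
  by (fact T_linear)

lemma T_mult: "mA (T u) (T v) = - T (l (T u) v + r (T v) u)"
  using anti_O by (simp add: anti_O_operator_def)

lemma l_mult: "l (mA x y) v = l x (l y v) - l y (l x v)"
  and r_mult: "r (mA x y) v = l x (r y v) - r y (l x v)"
  and r_l: "r y (l x v) = - r y (r x v)"
  using rep by (simp_all add: Leibniz_representation_def)

lemma bilinear_mA: "bilinear_map sA sA sA mA"
  using Leibniz by (simp add: Leibniz_algebra_def)

lemma bilinear_l: "bilinear_map sA sV sV l" and bilinear_r: "bilinear_map sA sV sV r"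
  using rep by (simp_all add: Leibniz_representation_def)

lemmas bilinear_simps =
  bilinear_map_simps[OF bilinear_mA] bilinear_map_simps[OF bilinear_l] bilinear_map_simps[OF bilinear_r]

definition succ_V :: "'v \<Rightarrow> 'v \<Rightarrow> 'v" where "succ_V u v = - l (T u) v"

definition prec_V :: "'v \<Rightarrow> 'v \<Rightarrow> 'v" where "prec_V u v = - r (T v) u"

abbreviation circ_V :: "'v \<Rightarrow> 'v \<Rightarrow> 'v" where "circ_V u v \<equiv> succ_V u v + prec_V u v"

definition strong_defect :: "'v \<Rightarrow> 'v \<Rightarrow> 'v \<Rightarrow> 'v" where
  "strong_defect u v w = l (mA (T u) (T v)) w + r (mA (T u) (T w)) v - r (mA (T v) (T w)) u"

lemma strong_iff_defect_zero:
  "strong_anti_O_operator sA sV mA l r T \<longleftrightarrow> (\<forall>u v w. strong_defect u v w = 0)"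
  using anti_O by (simp add: strong_anti_O_operator_def strong_defect_def)

lemma T_circ_V: "T (circ_V u v) = mA (T u) (T v)"
  by (simp add: succ_V_def prec_V_def T_mult T.neg T.add T.diff)

lemma succ_V_circ_V: "succ_V (circ_V u v) w = - l (mA (T u) (T v)) w"
  by (simp only: succ_V_def[of "circ_V u v"] T_circ_V)

lemma prec_V_circ_V: "prec_V u (circ_V v w) = - r (mA (T v) (T w)) u"
  by (simp only: prec_V_def[of _ "circ_V v w"] T_circ_V)

lemma AL1_defect_eq:
  "prec_V (circ_V u v) w - (succ_V u (circ_V v w) - succ_V v (circ_V u w)) = - strong_defect u v w"
  unfolding strong_defect_def succ_V_def prec_V_def
  by (simp add: bilinear_simps l_mult r_mult r_l algebra_simps)

lemma Leibniz_defect_eq: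
  "circ_V u (circ_V v w) - (circ_V (circ_V u v) w + circ_V v (circ_V u w))
     = strong_defect u v w + strong_defect u v w"
  unfolding strong_defect_def succ_V_circ_V prec_V_circ_V
  by (simp add: succ_V_def prec_V_def bilinear_simps l_mult r_mult r_l algebra_simps)

lemma AL2_on_V: "AL2_on UNIV succ_V prec_V"
  unfolding AL2_on_def succ_V_circ_V
  by (simp add: succ_V_def l_mult bilinear_simps)

lemma AL3_on_V: "AL3_on UNIV succ_V prec_V"
  unfolding AL3_on_def prec_V_circ_V
  by (simp add: succ_V_def prec_V_def r_mult bilinear_simps)

lemma AL4_on_V: "AL4_on UNIV succ_V prec_V"
  unfolding AL4_on_def
  by (simp add: succ_V_def prec_V_def r_l bilinear_simps T.neg)

lemma AL1_on_V_iff_strong: "AL1_on UNIV succ_V prec_V \<longleftrightarrow> strong_anti_O_operator sA sV mA l r T"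
proof -
  have "prec_V (circ_V u v) w = succ_V u (circ_V v w) - succ_V v (circ_V u w)
      \<longleftrightarrow> strong_defect u v w = 0" for u v w
    using AL1_defect_eq[of u v w] by (metis eq_iff_diff_eq_0 neg_equal_0_iff_equal)
  then show ?thesis
    unfolding AL1_on_def strong_iff_defect_zero by simp
qed

lemma succ_V_linear:
  "succ_V (a + b) v = succ_V a v + succ_V b v" "succ_V (sV c a) v = sV c (succ_V a v)"
  "succ_V a (v + w) = succ_V a v + succ_V a w" "succ_V a (sV c v) = sV c (succ_V a v)"
  by (simp_all add: succ_V_def T.add T.scale bilinear_simps)

lemma prec_V_linear:
  "prec_V (a + b) v = prec_V a v + prec_V b v" "prec_V (sV c a) v = sV c (prec_V a v)"
  "prec_V a (v + w) = prec_V a v + prec_V a w" "prec_V a (sV c v) = sV c (prec_V a v)"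
  by (simp_all add: prec_V_def T.add T.scale bilinear_simps)

lemma anti_pre_Leibniz_on_V_iff_strong:
  "anti_pre_Leibniz_on sV UNIV succ_V prec_V \<longleftrightarrow> strong_anti_O_operator sA sV mA l r T"
  unfolding anti_pre_Leibniz_on_def bilinear_on_def
  by (simp add: T.vs1.vector_space_axioms succ_V_linear prec_V_linear AL1_on_V_iff_strong AL2_on_V AL3_on_V AL4_on_V)

lemma bilinear_circ_V: "bilinear_map sV sV sV circ_V"
  unfolding bilinear_map_def linear_iff
  by (simp add: T.vs1.vector_space_axioms succ_V_linear prec_V_linear algebra_simps)

lemma T_l_eq_0: "T w = 0 \<Longrightarrow> T (l (T u) w) = 0"
  using T_mult[of u w] by (simp add: bilinear_simps T.neg)

lemma T_r_eq_0: "T w = 0 \<Longrightarrow> T (r (T v) w) = 0"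
  using T_mult[of w v] by (simp add: bilinear_simps T.neg)

lemma T_succ_V_cong:
  assumes "T u = T u'" "T v = T v'"
  shows "T (succ_V u v) = T (succ_V u' v')"
proof -
  have "T (l (T u) (v - v')) = 0"
    using assms by (simp add: T_l_eq_0 T.diff)
  then show ?thesis
    using assms by (simp add: succ_V_def T.neg T.diff bilinear_simps)
qed

lemma T_prec_V_cong:
  assumes "T u = T u'" "T v = T v'"
  shows "T (prec_V u v) = T (prec_V u' v')"
proof -
  have "T (r (T v) (u - u')) = 0"
    using assms by (simp add: T_r_eq_0 T.diff)
  then show ?thesis
    using assms by (simp add: prec_V_def T.neg T.diff bilinear_simps)
qed

lemma anti_pre_Leibniz_on_range_T:
  assumes "strong_anti_O_operator sA sV mA l r T"
  shows "\<exists>scA prA. (\<forall>u v. scA (T u) (T v) = T (succ_V u v) \<and> prA (T u) (T v) = T (prec_V u v))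
      \<and> anti_pre_Leibniz_on sA (range T) scA prA"
proof -
  obtain scA where scA: "\<And>u v. scA (T u) (T v) = T (succ_V u v)"
    using induced_operation_on_range[of T succ_V] T_succ_V_cong by blast
  obtain prA where prA: "\<And>u v. prA (T u) (T v) = T (prec_V u v)"
    using induced_operation_on_range[of T prec_V] T_prec_V_cong by blast
  have "anti_pre_Leibniz_on sV UNIV succ_V prec_V"
    using anti_pre_Leibniz_on_V_iff_strong assms ..
  then have "anti_pre_Leibniz_on sA (range T) scA prA"
    by (rule anti_pre_Leibniz_on_range[OF T_linear]) (simp_all add: scA prA)
  with scA prA show ?thesis
    by blast
qed

end

locale Leibniz_anti_O_char_0 = Leibniz_anti_O sA sV mA l r T
  for sA :: "'k::field_char_0 \<Rightarrow> 'a::ab_group_add \<Rightarrow> 'a" and sV :: "'k \<Rightarrow> 'v::ab_group_add \<Rightarrow> 'v"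
    and mA l r T
begin

lemma Leibniz_algebra_circ_V_iff_strong:
  "Leibniz_algebra sV circ_V \<longleftrightarrow> strong_anti_O_operator sA sV mA l r T"
proof -
  have "circ_V u (circ_V v w) = circ_V (circ_V u v) w + circ_V v (circ_V u w)
      \<longleftrightarrow> strong_defect u v w = 0" for u v w
    using Leibniz_defect_eq[of u v w] vector_space_double_eq_zero_iff[OF T.vs1.vector_space_axioms]
    by (metis eq_iff_diff_eq_0)
  then show ?thesis
    unfolding Leibniz_algebra_def strong_iff_defect_zero
    by (simp add: T.vs1.vector_space_axioms bilinear_circ_V)
qed

end

theorem proposition2p9:
  fixes sA :: "'k::field_char_0 \<Rightarrow> 'a::ab_group_add \<Rightarrow> 'a"
    and sV :: "'k \<Rightarrow> 'v::ab_group_add \<Rightarrow> 'v"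
    and mA :: "'a \<Rightarrow> 'a \<Rightarrow> 'a"
    and l r :: "'a \<Rightarrow> 'v \<Rightarrow> 'v"
    and T :: "'v \<Rightarrow> 'a"
    and scV prV :: "'v \<Rightarrow> 'v \<Rightarrow> 'v"
  assumes finA: "fin_dim_vs sA" and finV: "fin_dim_vs sV"
    and Leib: "Leibniz_algebra sA mA"
    and rep: "Leibniz_representation sA sV mA l r"
    and Top: "anti_O_operator sA sV mA l r T"
    and scV_def: "\<And>u v. scV u v = - l (T u) v"
    and prV_def: "\<And>u v. prV u v = - r (T v) u"
  shows
    "(AL2_on UNIV scV prV \<and> AL3_on UNIV scV prV \<and> AL4_on UNIV scV prV)
     \<and> (anti_pre_Leibniz_on sV UNIV scV prV \<longleftrightarrow> strong_anti_O_operator sA sV mA l r T)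
     \<and> (Leibniz_algebra sV (\<lambda>u v. scV u v + prV u v) \<longleftrightarrow> strong_anti_O_operator sA sV mA l r T)
     \<and> (strong_anti_O_operator sA sV mA l r T \<longrightarrow>
          (\<forall>u v. T (scV u v + prV u v) = mA (T u) (T v))
          \<and> (\<forall>u v u' v'. T u = T u' \<longrightarrow> T v = T v' \<longrightarrow>
                T (scV u v) = T (scV u' v') \<and> T (prV u v) = T (prV u' v'))
          \<and> (\<exists>scA prA. (\<forall>u v. scA (T u) (T v) = T (scV u v) \<and> prA (T u) (T v) = T (prV u v))
                \<and> anti_pre_Leibniz_on sA (range T) scA prA))"
proof -
  interpret Leibniz_anti_O_char_0 sA sV mA l r T
    by unfold_locales (fact Leib rep Top)+
  have "scV = succ_V" and "prV = prec_V"
    by (simp_all add: fun_eq_iff scV_def prV_def succ_V_def prec_V_def)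
  then show ?thesis
    using AL2_on_V AL3_on_V AL4_on_V anti_pre_Leibniz_on_V_iff_strong Leibniz_algebra_circ_V_iff_strong
      T_circ_V T_succ_V_cong T_prec_V_cong anti_pre_Leibniz_on_range_T by blast
qed

end
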